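(* Let $H$ be a real Hilbert space, $A:H\to c_0$ bounded linear with adjoint $A^*:\ell^1\to H$ (identifying $c_0^*=\ell^1$), and assume $A$ and $A^*$ are injective. Let $u^\dagger\in\ell^1$ and suppose there exists $v^\dagger\in H$ with $\|Av^\dagger\|_\infty\le1$ and $(Av^\dagger)_i=\operatorname{sign}(u^\dagger_i)$ whenever $u^\dagger_i\ne0$. Then there exists $v^\ddagger\in H$ with $\|Av^\ddagger\|_\infty\le1$, $(Av^\ddagger)_i=\operatorname{sign}(u^\dagger_i)$ whenever $u^\dagger_i\ne0$, and $|(Av^\ddagger)_i|<1$ whenever $u^\dagger_i=0$.
   Context: $A^*$ is defined by $\langle A^*u,z\rangle=\sum_iu_i(Az)_i$. $\operatorname{sign}(t)=t/|t|$ for $t\neq0$. *)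

theory Defs
  imports "HOL-Analysis.Analysis"
begin

definition in_c0 :: "(nat \<Rightarrow> real) \<Rightarrow> bool" where
  "in_c0 x \<longleftrightarrow> x \<longlonglongrightarrow> 0"

definition in_l1 :: "(nat \<Rightarrow> real) \<Rightarrow> bool" where
  "in_l1 u \<longleftrightarrow> summable (\<lambda>i. \<bar>u i\<bar>)"

definition sup_norm :: "(nat \<Rightarrow> real) \<Rightarrow> real" where
  "sup_norm x = (SUP i. \<bar>x i\<bar>)"

definition bounded_linear_c0 :: "('h::real_normed_vector \<Rightarrow> nat \<Rightarrow> real) \<Rightarrow> bool" where
  "bounded_linear_c0 A \<longleftrightarrow>
     (\<forall>i. linear (\<lambda>z. A z i)) \<and> (\<forall>z. in_c0 (A z)) \<and> (\<exists>K. \<forall>z i. \<bar>A z i\<bar> \<le> K * norm z)"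

definition is_adjoint_c0 ::
  "('h::real_inner \<Rightarrow> nat \<Rightarrow> real) \<Rightarrow> ((nat \<Rightarrow> real) \<Rightarrow> 'h) \<Rightarrow> bool" where
  "is_adjoint_c0 A Astar \<longleftrightarrow>
     (\<forall>u z. in_l1 u \<longrightarrow> inner (Astar u) z = (\<Sum>i. u i * A z i))"

end

theory Submission
  imports Defs
begin

text \<open>Since \<open>A v\<^sup>\<dagger>\<close> tends to 0, \<open>|(A v\<^sup>\<dagger>)\<^sub>i| < 1/2\<close> for \<open>i \<ge> N\<close>, so the support of \<open>u\<^sup>\<dagger>\<close>,
  where \<open>|(A v\<^sup>\<dagger>)\<^sub>i| = 1\<close>, lies below \<open>N\<close>. Injectivity of \<open>A\<^sup>*\<close> on finitely supported sequences
  means that no nontrivial finite linear combination of the coordinate functionals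
  \<open>z \<mapsto> (A z)\<^sub>i\<close> vanishes, so \<open>z \<mapsto> ((A z)\<^sub>i)\<^sub>i\<^sub><\<^sub>N\<close> is onto \<open>\<real>\<^sup>N\<close>. Choose \<open>w\<close> with \<open>(A w)\<^sub>i = 0\<close> on
  the support of \<open>u\<^sup>\<dagger>\<close> and \<open>(A w)\<^sub>i = -(A v\<^sup>\<dagger>)\<^sub>i\<close> at the other indices below \<open>N\<close>; then
  \<open>v\<^sup>\<ddagger> = v\<^sup>\<dagger> + t w\<close> for small \<open>t > 0\<close> shrinks those entries by the factor \<open>1 - t\<close> and keeps
  the entries beyond \<open>N\<close> below \<open>1/2 + t \<parallel>A w\<parallel>\<^sub>\<infinity> < 1\<close>.\<close>

lemma coordinate_add: "\<forall>i. linear (\<lambda>z. A z i) \<Longrightarrow> A (x + y) i = A x i + A y i"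
  using real_vector.linear_add[of "\<lambda>z. A z i"] by blast

lemma coordinate_diff: "\<forall>i. linear (\<lambda>z. A z i) \<Longrightarrow> A (x - y) i = A x i - A y i"
  using real_vector.linear_diff[of "\<lambda>z. A z i"] by blast

lemma coordinate_scaleR: "\<forall>i. linear (\<lambda>z. A z i) \<Longrightarrow> A (c *\<^sub>R x) i = c * A x i"
  using linear_cmul[of "\<lambda>z. A z i"] by simp

lemma coordinate_sum: "\<forall>i. linear (\<lambda>z. A z i) \<Longrightarrow> A (sum g S) i = (\<Sum>a\<in>S. A (g a) i)"
  using real_vector.linear_sum[of "\<lambda>z. A z i"] by blast

lemma sup_norm_le_iff:
  assumes "bdd_above (range (\<lambda>i. \<bar>x i\<bar>))"
  shows "sup_norm x \<le> c \<longleftrightarrow> (\<forall>i. \<bar>x i\<bar> \<le> c)"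
  unfolding sup_norm_def using cSUP_le_iff[OF UNIV_not_empty assms] by simp

lemma adjoint_finite_annihilator_eq_zero:
  fixes A :: "'h::real_inner \<Rightarrow> nat \<Rightarrow> real"
  assumes adj: "is_adjoint_c0 A Astar" and inj: "inj_on Astar {u. in_l1 u}"
    and fin: "finite S" and supp: "\<And>j. j \<notin> S \<Longrightarrow> u j = 0"
    and annihilates: "\<And>z. (\<Sum>j\<in>S. u j * A z j) = 0"
  shows "u = (\<lambda>_. 0)"
proof -
  have adjoint_zero: "Astar u = 0" if "in_l1 u" "finite S" "\<And>j. j \<notin> S \<Longrightarrow> u j = 0"
    "\<And>z. (\<Sum>j\<in>S. u j * A z j) = 0" for u S
  proof -
    have "inner (Astar u) (Astar u) = (\<Sum>j. u j * A (Astar u) j)"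
      using adj that(1) unfolding is_adjoint_c0_def by blast
    also have "\<dots> = (\<Sum>j\<in>S. u j * A (Astar u) j)"
      by (rule suminf_finite) (use that in auto)
    also have "\<dots> = 0" by (rule that(4))
    finally show ?thesis by simp
  qed
  have u_l1: "in_l1 u" unfolding in_l1_def
    by (rule summable_finite[OF fin]) (use supp in auto)
  have zero_l1: "in_l1 (\<lambda>_::nat. 0::real)" by (simp add: in_l1_def)
  have "Astar u = Astar (\<lambda>_. 0)"
    using adjoint_zero[OF u_l1 fin supp annihilates]
      adjoint_zero[OF zero_l1, of "{}"] by simp
  then show ?thesis using inj u_l1 zero_l1 unfolding inj_on_def by blast
qed

text \<open>If every \<open>z\<close> vanishing on \<open>F\<close> vanishes at \<open>k\<close>, the \<open>k\<close>-th coordinate is the combination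
  of those on \<open>F\<close> read off from a dual basis \<open>zz\<close>.\<close>

lemma coordinate_expansion:
  fixes A :: "'h::real_vector \<Rightarrow> nat \<Rightarrow> real"
  assumes lin: "\<forall>i. linear (\<lambda>z. A z i)" and fin: "finite F"
    and dual: "\<And>i j. j \<in> F \<Longrightarrow> A (zz i) j = (if j = i then 1 else 0)"
    and vanish: "\<And>z. \<forall>i\<in>F. A z i = 0 \<Longrightarrow> A z k = 0"
  shows "A z k = (\<Sum>j\<in>F. A z j * A (zz j) k)"
proof -
  define y where "y = z - (\<Sum>j\<in>F. A z j *\<^sub>R zz j)"
  have Ay: "A y i = A z i - (\<Sum>j\<in>F. A z j * A (zz j) i)" for i
    by (simp add: y_def coordinate_diff[OF lin] coordinate_sum[OF lin] coordinate_scaleR[OF lin])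
  have "\<forall>i\<in>F. A y i = 0"
  proof
    fix i assume i: "i \<in> F"
    have "(\<Sum>j\<in>F. A z j * A (zz j) i) = (\<Sum>j\<in>F. if j = i then A z j else 0)"
      using dual[OF i] by (intro sum.cong) auto
    also have "\<dots> = A z i" using i fin by simp
    finally show "A y i = 0" using Ay by simp
  qed
  then have "A y k = 0" by (rule vanish)
  then show ?thesis using Ay by simp
qed

lemma coordinates_onto_finite:
  fixes A :: "'h::real_inner \<Rightarrow> nat \<Rightarrow> real"
  assumes lin: "\<forall>i. linear (\<lambda>z. A z i)" and adj: "is_adjoint_c0 A Astar"
    and inj: "inj_on Astar {u. in_l1 u}" and fin: "finite F"
  shows "\<exists>z. \<forall>i\<in>F. A z i = b i"
  using fin
proof (induction F arbitrary: b rule: finite_induct)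
  case empty
  then show ?case by simp
next
  case (insert k F)
  obtain zb where zb: "\<forall>i\<in>F. A zb i = b i" using insert.IH by blast
  show ?case
  proof (cases "\<exists>z0. (\<forall>i\<in>F. A z0 i = 0) \<and> A z0 k \<noteq> 0")
    case True
    then obtain z0 where z0: "\<forall>i\<in>F. A z0 i = 0" "A z0 k \<noteq> 0" by blast
    define c where "c = (b k - A zb k) / A z0 k"
    have "\<forall>i\<in>insert k F. A (zb + c *\<^sub>R z0) i = b i"
      using z0 zb by (auto simp: coordinate_add[OF lin] coordinate_scaleR[OF lin] c_def)
    then show ?thesis by blast
  next
    case False
    have "\<exists>z. \<forall>j\<in>F. A z j = (if j = i then 1 else 0)" for i
      using insert.IH .
    then obtain zz where dual: "\<And>i j. j \<in> F \<Longrightarrow> A (zz i) j = (if j = i then 1 else 0)"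
      by metis
    have vanish: "A z k = 0" if "\<forall>i\<in>F. A z i = 0" for z using False that by blast
    define u where "u j = (if j = k then 1 else if j \<in> F then - A (zz j) k else 0)" for j
    have annihilates: "(\<Sum>j\<in>insert k F. u j * A z j) = 0" for z
    proof -
      have "A z k = (\<Sum>j\<in>F. A z j * A (zz j) k)"
        using coordinate_expansion[OF lin insert.hyps(1) dual vanish] .
      moreover have "(\<Sum>j\<in>F. u j * A z j) = - (\<Sum>j\<in>F. A z j * A (zz j) k)"
        using insert.hyps by (auto simp: u_def sum_negf[symmetric] intro!: sum.cong)
      ultimately show ?thesis using insert.hyps by (simp add: u_def)
    qed
    have supp: "u j = 0" if "j \<notin> insert k F" for j using that by (simp add: u_def)
    have "u = (\<lambda>_. 0)"
      using adjoint_finite_annihilator_eq_zero[OF adj inj _ supp annihilates] insert.hyps(1) by simp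
    then have "u k = 0" by simp
    then show ?thesis by (simp add: u_def)
  qed
qed

lemma strict_perturbation:
  fixes A :: "'h::real_normed_vector \<Rightarrow> nat \<Rightarrow> real"
  assumes lin: "\<forall>i. linear (\<lambda>z. A z i)" and bound: "\<And>z i. \<bar>A z i\<bar> \<le> K * norm z"
    and onto: "\<And>F b. finite F \<Longrightarrow> \<exists>z. \<forall>i\<in>F. A z i = b i"
    and le1: "\<And>i. \<bar>A v i\<bar> \<le> 1" and to_zero: "A v \<longlonglongrightarrow> 0"
    and S: "\<And>i. i \<in> S \<Longrightarrow> \<bar>A v i\<bar> = 1"
  shows "\<exists>v'. (\<forall>i\<in>S. A v' i = A v i) \<and> (\<forall>i. i \<notin> S \<longrightarrow> \<bar>A v' i\<bar> < 1)"
proof -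
  obtain N where N: "\<And>n. n \<ge> N \<Longrightarrow> \<bar>A v n\<bar> < 1/2"
    using to_zero unfolding LIMSEQ_iff by (metis real_norm_def diff_zero half_gt_zero zero_less_one)
  obtain w where w: "\<forall>i\<in>{..<N}. A w i = (if i \<in> S then 0 else - A v i)"
    using onto[OF finite_lessThan, of N "\<lambda>i. if i \<in> S then 0 else - A v i"] by blast
  define M where "M = K * norm w"
  have Mw: "\<bar>A w i\<bar> \<le> M" for i using bound M_def by simp
  then have M0: "M \<ge> 0" by (meson abs_ge_zero order_trans)
  define t where "t = 1 / (4 * (M + 1))"
  have t0: "0 < t" and t1: "t \<le> 1/4" and tM: "t * M < 1/4"
    using M0 by (auto simp: t_def field_simps)
  define v' where "v' = v + t *\<^sub>R w"
  have Av': "A v' i = A v i + t * A w i" for i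
    by (simp add: v'_def coordinate_add[OF lin] coordinate_scaleR[OF lin])
  have "A v' i = A v i" if "i \<in> S" for i
  proof -
    have "i < N" using N[of i] S[OF that] by (cases "i \<ge> N") auto
    then show ?thesis using w that Av' by auto
  qed
  moreover have "\<bar>A v' i\<bar> < 1" if "i \<notin> S" for i
  proof (cases "i < N")
    case True
    then have "A v' i = (1 - t) * A v i" using w that Av' by (simp add: algebra_simps)
    then have "\<bar>A v' i\<bar> = (1 - t) * \<bar>A v i\<bar>" using t1 by (simp add: abs_mult)
    also have "\<dots> \<le> 1 - t" using le1[of i] t1 by (simp add: mult_left_le)
    finally show ?thesis using t0 by simp
  next
    case False
    have "\<bar>A v' i\<bar> \<le> \<bar>A v i\<bar> + t * \<bar>A w i\<bar>"
      using Av' t0 by (simp add: abs_triangle_ineq[THEN order_trans] abs_mult)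
    also have "t * \<bar>A w i\<bar> \<le> t * M" using Mw t0 by (simp add: mult_left_mono)
    finally show ?thesis using N[of i] False tM by simp
  qed
  ultimately show ?thesis by blast
qed

theorem lemma2:
  fixes A :: "'h::{real_inner, complete_space} \<Rightarrow> nat \<Rightarrow> real"
    and Astar :: "(nat \<Rightarrow> real) \<Rightarrow> 'h"
    and udag :: "nat \<Rightarrow> real"
  assumes "bounded_linear_c0 A"
    and "is_adjoint_c0 A Astar"
    and "inj A"
    and "inj_on Astar {u. in_l1 u}"
    and "in_l1 udag"
    and "\<exists>v. sup_norm (A v) \<le> 1 \<and> (\<forall>i. udag i \<noteq> 0 \<longrightarrow> A v i = sgn (udag i))"
  shows "\<exists>v. sup_norm (A v) \<le> 1 \<and> (\<forall>i. udag i \<noteq> 0 \<longrightarrow> A v i = sgn (udag i))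
             \<and> (\<forall>i. udag i = 0 \<longrightarrow> \<bar>A v i\<bar> < 1)"
proof -
  have lin: "\<forall>i. linear (\<lambda>z. A z i)" and c0: "\<And>z. A z \<longlonglongrightarrow> 0"
    using assms(1) unfolding bounded_linear_c0_def in_c0_def by auto
  obtain K where K: "\<And>z i. \<bar>A z i\<bar> \<le> K * norm z"
    using assms(1) unfolding bounded_linear_c0_def by auto
  have sup_norm_le: "sup_norm (A z) \<le> c \<longleftrightarrow> (\<forall>i. \<bar>A z i\<bar> \<le> c)" for z c
    using K by (intro sup_norm_le_iff bdd_aboveI2) blast
  obtain vd where vd: "sup_norm (A vd) \<le> 1" "\<forall>i. udag i \<noteq> 0 \<longrightarrow> A vd i = sgn (udag i)"
    using assms(6) by blast
  have vd_le1: "\<And>i. \<bar>A vd i\<bar> \<le> 1" using vd(1) sup_norm_le by simp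
  have vd_one: "\<And>i. i \<in> {i. udag i \<noteq> 0} \<Longrightarrow> \<bar>A vd i\<bar> = 1"
    using vd(2) by (simp add: abs_sgn)
  obtain v where v_supp: "\<forall>i\<in>{i. udag i \<noteq> 0}. A v i = A vd i"
    and v_off: "\<forall>i. i \<notin> {i. udag i \<noteq> 0} \<longrightarrow> \<bar>A v i\<bar> < 1"
    using strict_perturbation[OF lin K coordinates_onto_finite[OF lin assms(2,4)] vd_le1 c0 vd_one]
    by blast
  have "\<bar>A v i\<bar> \<le> 1" for i
    using v_supp v_off vd_le1[of i] by (cases "udag i = 0") auto
  then show ?thesis using v_supp v_off vd(2) sup_norm_le by auto
qed

end
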